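(* Let $\alpha=\frac{r}{s}+k\sqrt{p/q}$ be a positive irrational, where $r\in\mathbb Z$, $p,q,s\in\mathbb N$, $k\in\{-1,1\}$, $s$ odd, $\gcd(r,s)=1$, $\gcd(p,q)=1$. Let $d_1=\gcd(ps^2-qr^2,qs)$ and $N=\frac{pqs^4}{d_1^2}$ (a positive nonsquare integer). (1) If $x^2-Ny^2=-1$ has no integer solution, then for $A\in GL(2,\mathbb Z)$, $\pi(A)$ restricts to an isometric automorphism of $\mathcal A_\alpha$ if and only if $$A=\begin{bmatrix} -\frac{qrs}{d_1}y_1+x_1 & \frac{qs^2}{d_1}y_1\\ \frac{ps^2-qr^2}{d_1}y_1 & \frac{qrs}{d_1}y_1+x_1\end{bmatrix}^n$$ for some $n\in\mathbb Z$, where $(x_1,y_1)$ is the fundamental solution of $x^2-Ny^2=1$. (2) If $x^2-Ny^2=-1$ has an integer solution, then $\pi(A)$ restricts to an isometric automorphism of $\mathcal A_\alpha$ if and only if $$A=\begin{bmatrix} -\frac{qrs}{d_1}ky_1'+x_1' & \frac{qs^2}{d_1}ky_1'\\ \frac{ps^2-qr^2}{d_1}ky_1' & \frac{qrs}{d_1}ky_1'+x_1'\end{bmatrix}^n$$ for some $n\in\mathbb Z$, where $(x_1',y_1')$ is the fundamental solution of $x^2-Ny^2=-1$.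
   Context: For a positive irrational $\alpha$, $\mathcal A_\alpha=\{f\in C(\mathbb T^2): \hat f(m,n)=0 \text{ whenever } m+\alpha n<0\}$ ($\mathbb T$ the unit circle, $\hat f$ the Fourier transform on $\mathbb Z^2$), a uniform algebra with the sup norm. For $A=\begin{bmatrix} a&b\\ c&d\end{bmatrix}\in GL(2,\mathbb Z)$, $\pi(A)(f)=f\circ\varphi$ with $\varphi(z,w)=(z^aw^b,z^cw^d)$. For a positive nonsquare integer $N$ and $e\in\{1,-1\}$, the fundamental solution of $x^2-Ny^2=e$ (when a solution exists) is the solution $(x_1,y_1)$ in positive integers with $x_1$ smallest. *)

theory Defs
  imports "HOL-Analysis.Analysis"
begin

definition torus :: "(complex \<times> complex) set" where
  "torus = {(z, w). norm z = 1 \<and> norm w = 1}"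

definition fourier2 :: "(complex \<times> complex \<Rightarrow> complex) \<Rightarrow> int \<Rightarrow> int \<Rightarrow> complex" where
  "fourier2 f m n =
     integral (cbox (0::real, 0::real) (2*pi, 2*pi))
       (\<lambda>(s, t). f (cis s, cis t) * cis (- (of_int m * s + of_int n * t))) / (4 * pi^2)"

text \<open>The algebra A_alpha (functions are only relevant on the torus).\<close>
definition A_alg :: "real \<Rightarrow> (complex \<times> complex \<Rightarrow> complex) set" where
  "A_alg \<alpha> = {f. continuous_on torus f \<and>
      (\<forall>m n. real_of_int m + \<alpha> * real_of_int n < 0 \<longrightarrow> fourier2 f m n = 0)}"

definition supnorm :: "(complex \<times> complex \<Rightarrow> complex) \<Rightarrow> real" where
  "supnorm f = Sup ((\<lambda>x. norm (f x)) ` torus)"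

definition mat2 :: "int \<Rightarrow> int \<Rightarrow> int \<Rightarrow> int \<Rightarrow> int^2^2" where
  "mat2 a b c d = (\<chi> i j. if i = 1 then (if j = 1 then a else b) else (if j = 1 then c else d))"

definition GL2Z :: "int^2^2 \<Rightarrow> bool" where
  "GL2Z A \<longleftrightarrow> det A = 1 \<or> det A = -1"

fun matpow :: "int^2^2 \<Rightarrow> nat \<Rightarrow> int^2^2" where
  "matpow A 0 = mat 1"
| "matpow A (Suc n) = A ** matpow A n"

text \<open>Inverse of a matrix in GL(2,Z): det A * adj A (det A = +-1).\<close>
definition mat2_inv :: "int^2^2 \<Rightarrow> int^2^2" where
  "mat2_inv A = mat2 (det A * A$2$2) (- det A * A$1$2) (- det A * A$2$1) (det A * A$1$1)"

definition matzpow :: "int^2^2 \<Rightarrow> int \<Rightarrow> int^2^2" where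
  "matzpow A n = (if 0 \<le> n then matpow A (nat n) else matpow (mat2_inv A) (nat (- n)))"

definition phiA :: "int^2^2 \<Rightarrow> complex \<times> complex \<Rightarrow> complex \<times> complex" where
  "phiA A = (\<lambda>(z, w). (z powi (A$1$1) * w powi (A$1$2), z powi (A$2$1) * w powi (A$2$2)))"

definition piA :: "int^2^2 \<Rightarrow> (complex \<times> complex \<Rightarrow> complex) \<Rightarrow> (complex \<times> complex \<Rightarrow> complex)" where
  "piA A f = f \<circ> phiA A"

text \<open>pi(A) restricts to an isometric automorphism of A_alpha: it maps A_alpha into
  A_alpha, onto A_alpha (as functions on the torus), and preserves the sup norm.
  (pi(A) is automatically linear and multiplicative.)\<close>
definition iso_aut :: "real \<Rightarrow> int^2^2 \<Rightarrow> bool" where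
  "iso_aut \<alpha> A \<longleftrightarrow>
     (\<forall>f\<in>A_alg \<alpha>. piA A f \<in> A_alg \<alpha>) \<and>
     (\<forall>g\<in>A_alg \<alpha>. \<exists>f\<in>A_alg \<alpha>. \<forall>x\<in>torus. piA A f x = g x) \<and>
     (\<forall>f\<in>A_alg \<alpha>. supnorm (piA A f) = supnorm f)"

definition fund_sol :: "int \<Rightarrow> int \<Rightarrow> int \<Rightarrow> int \<Rightarrow> bool" where
  "fund_sol N e x y \<longleftrightarrow> x > 0 \<and> y > 0 \<and> x^2 - N * y^2 = e \<and>
     (\<forall>x' y'. x' > 0 \<and> y' > 0 \<and> x'^2 - N * y'^2 = e \<longrightarrow> x \<le> x')"

end

theory Submission
  imports Defs
begin

text \<open>Composition with \<open>\<phi>\<close> preserves the Haar measure of the torus whenever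
  \<open>A \<in> GL(2,\<int>)\<close>, so \<open>\<pi>(A)\<close> moves the Fourier coefficient at \<open>(m, n)\<close> to
  \<open>A\<^sup>T (m, n)\<close>. Testing on the monomials \<open>z\<^sup>m w\<^sup>n\<close> shows that \<open>\<pi>(A)\<close> maps
  \<open>\<A>\<^sub>\<alpha>\<close> onto itself exactly when \<open>A\<^sup>T\<close> preserves the half-plane \<open>m + \<alpha> n \<ge> 0\<close>,
  i.e. when \<open>(1, \<alpha>)\<close> is an eigenvector of \<open>A\<close> with positive eigenvalue \<open>\<lambda>\<close>;
  isometry is then automatic, as \<open>\<phi>\<close> is a homeomorphism of the torus.
  If \<open>\<alpha>\<close> is a root of \<open>Q X\<^sup>2 - 2 R X - C\<close>, these matrices are
  \<open>[[x - R y, Q y], [C y, x + R y]]\<close>, with eigenvalue \<open>x \<plusminus> y \<surd>N\<close>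
  (\<open>N = R\<^sup>2 + Q C\<close>), a unit of \<open>\<int>[\<surd>N]\<close> of norm \<open>det A\<close>. A matrix is determined by
  its eigenvalue, so the isometric automorphisms form the cyclic group generated by the
  matrix whose eigenvalue is the fundamental unit; this unit comes from the fundamental
  solution of \<open>x\<^sup>2 - N y\<^sup>2 = -1\<close> if that equation is solvable, and of
  \<open>x\<^sup>2 - N y\<^sup>2 = 1\<close> otherwise.\<close>


section \<open>Integrals of periodic functions\<close>

definition periodic_2pi :: "(real \<Rightarrow> 'a) \<Rightarrow> bool" where
  "periodic_2pi h \<longleftrightarrow> (\<forall>x. h (x + 2*pi) = h x)"

lemma periodic_2pi_int:
  assumes "periodic_2pi h"
  shows "h (x + 2*pi * of_int k) = h x"
proof (induction k rule: int_induct[where k = 0])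
  case (step1 i)
  then show ?case
    using assms[unfolded periodic_2pi_def, rule_format, of "x + 2*pi * of_int i"]
    by (simp add: algebra_simps)
next
  case (step2 i)
  then show ?case
    using assms[unfolded periodic_2pi_def, rule_format, of "x + 2*pi * of_int (i - 1)"]
    by (simp add: algebra_simps)
qed simp

lemma integral_periodic_shift:
  fixes h :: "real \<Rightarrow> 'a::banach"
  assumes cont: "continuous_on UNIV h" and per: "periodic_2pi h"
  shows "integral {0..2*pi} (\<lambda>s. h (s + c)) = integral {0..2*pi} h"
proof -
  define c0 where "c0 = c - 2*pi * of_int \<lfloor>c / (2*pi)\<rfloor>"
  have "2*pi * of_int \<lfloor>c / (2*pi)\<rfloor> \<le> c" "c < 2*pi * (of_int \<lfloor>c / (2*pi)\<rfloor> + 1)"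
    using floor_divide_lower[of "2*pi" c] floor_divide_upper[of "2*pi" c] by (simp_all add: mult.commute)
  then have c0: "0 \<le> c0" "c0 \<le> 2*pi"
    unfolding c0_def by (simp_all add: algebra_simps)
  have int: "\<And>a b. h integrable_on {a..b}"
    using integrable_continuous_interval continuous_on_subset[OF cont] by blast
  have "integral {0..2*pi} (\<lambda>s. h (s + c)) = integral {0..2*pi} (h \<circ> (+) c0)"
    using periodic_2pi_int[OF per, of "s + c0" "\<lfloor>c / (2*pi)\<rfloor>" for s]
    by (simp add: o_def c0_def algebra_simps)
  also have "\<dots> = integral {c0..2*pi} h + integral {2*pi..2*pi+c0} h"
    using Henstock_Kurzweil_Integration.integral_combine[of c0 "2*pi" "2*pi+c0" h] c0 int
    by (simp add: integral_shift_Icc_real add.commute)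
  also have "integral {2*pi..2*pi+c0} h = integral {0..c0} (h \<circ> (+) (2*pi))"
    by (simp add: integral_shift_Icc_real add.commute)
  also have "\<dots> = integral {0..c0} h"
    using per by (simp add: o_def periodic_2pi_def add.commute)
  also have "integral {c0..2*pi} h + integral {0..c0} h = integral {0..2*pi} h"
    using Henstock_Kurzweil_Integration.integral_combine[of 0 c0 "2*pi" h] c0 int by (simp add: add.commute)
  finally show ?thesis .
qed

lemma integral_periodic_reflect:
  fixes h :: "real \<Rightarrow> 'a::banach"
  assumes "continuous_on UNIV h" and "periodic_2pi h"
  shows "integral {0..2*pi} (\<lambda>s. h (- s)) = integral {0..2*pi} h"
proof -
  have "integral {0..2*pi} (\<lambda>s. h (- s)) = integral {-2*pi..0} h"
    using Henstock_Kurzweil_Integration.integral_reflect_real[of 0 "-2*pi" h] by simp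
  also have "\<dots> = integral {0..2*pi} (\<lambda>s. h (s + (-2*pi)))"
    using integral_shift_Icc_real[of 0 "2*pi" h "-2*pi"] by (simp add: o_def add.commute)
  also have "\<dots> = integral {0..2*pi} h"
    using integral_periodic_shift[OF assms] .
  finally show ?thesis .
qed

section \<open>Integer 2x2 matrices\<close>

lemma mat2_nth [simp]:
  "mat2 a b c d $ 1 $ 1 = a" "mat2 a b c d $ 1 $ 2 = b"
  "mat2 a b c d $ 2 $ 1 = c" "mat2 a b c d $ 2 $ 2 = d"
  by (simp_all add: mat2_def)

lemma mat2_eta: "A = mat2 (A$1$1) (A$1$2) (A$2$1) (A$2$2)"
  by (simp add: vec_eq_iff forall_2)

lemma mat2_eq_iff: "mat2 a b c d = mat2 a' b' c' d' \<longleftrightarrow> a = a' \<and> b = b' \<and> c = c' \<and> d = d'"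
  by (metis mat2_nth)

lemma mat2_mult:
  "mat2 a b c d ** mat2 a' b' c' d' = mat2 (a*a' + b*c') (a*b' + b*d') (c*a' + d*c') (c*b' + d*d')"
  by (simp add: vec_eq_iff forall_2 matrix_matrix_mult_def sum_2)

lemma mat2_one: "mat 1 = mat2 1 0 0 1"
  by (simp add: vec_eq_iff forall_2 mat_def)

lemma det_mat2: "det (mat2 a b c d) = a*d - b*c"
  by (simp add: det_2)

lemma mat2_mult_eq_one:
  fixes A B :: "int^2^2"
  assumes "B ** A = mat 1"
  shows "B$1$1 * A$1$1 + B$1$2 * A$2$1 = 1" "B$1$1 * A$1$2 + B$1$2 * A$2$2 = 0"
    "B$2$1 * A$1$1 + B$2$2 * A$2$1 = 0" "B$2$1 * A$1$2 + B$2$2 * A$2$2 = 1"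
  using assms mat2_eta[of A] mat2_eta[of B] by (metis mat2_mult mat2_one mat2_eq_iff)+

lemma mat2_inv_mult:
  assumes "det A = 1 \<or> det A = -1"
  shows "mat2_inv A ** A = mat 1" and "A ** mat2_inv A = mat 1"
proof -
  obtain a b c d where A: "A = mat2 a b c d" using mat2_eta by blast
  have D: "(a*d - b*c) * (a*d - b*c) = 1" using assms by (auto simp: A det_mat2)
  show "mat2_inv A ** A = mat 1"
    unfolding A mat2_inv_def det_mat2 mat2_nth mat2_mult mat2_one mat2_eq_iff
    by (intro conjI) (use D in algebra)+
  show "A ** mat2_inv A = mat 1"
    unfolding A mat2_inv_def det_mat2 mat2_nth mat2_mult mat2_one mat2_eq_iff
    by (intro conjI) (use D in algebra)+
qed

lemma det_mat2_inv:
  assumes "det A = 1 \<or> det A = -1"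
  shows "det (mat2_inv A) = det A"
proof -
  obtain a b c d where A: "A = mat2 a b c d" using mat2_eta by blast
  have "(a*d - b*c) * (a*d - b*c) = 1" using assms by (auto simp: A det_mat2)
  then show ?thesis unfolding A mat2_inv_def det_mat2 mat2_nth by algebra
qed

lemma unit_int_cases: "(a::int) * d = 1 \<or> a * d = -1 \<Longrightarrow> (a = 1 \<or> a = -1) \<and> (d = 1 \<or> d = -1)"
  by (metis mult_minus_left pos_zmult_eq_1_iff_lemma zmult_eq_1_iff minus_equation_iff)

text \<open>Row reduction by the Euclidean algorithm on the first column.\<close>
lemma GL2Z_generated:
  fixes P :: "int^2^2 \<Rightarrow> bool"
  assumes shear: "\<And>b. P (mat2 1 b 0 1)" and neg: "P (mat2 (-1) 0 0 1)" and swap: "P (mat2 0 1 1 0)"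
    and mult: "\<And>A B. P A \<Longrightarrow> P B \<Longrightarrow> P (A ** B)"
    and det: "det A = 1 \<or> det A = -1"
  shows "P A"
  using det
proof (induction "nat \<bar>A$2$1\<bar>" arbitrary: A rule: less_induct)
  case less
  obtain a b c d where A: "A = mat2 a b c d" using mat2_eta by blast
  have det_A: "a*d - b*c = 1 \<or> a*d - b*c = -1" using less.prems by (simp add: A det_mat2)
  have diag: "P (mat2 a 0 0 d)" if "a = 1 \<or> a = -1" "d = 1 \<or> d = -1" for a d
  proof -
    have "mat2 1 0 0 (-1) = mat2 0 1 1 0 ** mat2 (-1) 0 0 1 ** mat2 0 1 1 0"
      and "mat2 (-1) 0 0 (-1) = mat2 (-1) 0 0 1 ** mat2 1 0 0 (-1)"
      by (simp_all add: mat2_mult)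
    then have "P (mat2 1 0 0 (-1))" "P (mat2 (-1) 0 0 (-1))" by (metis mult neg swap)+
    then show ?thesis using that shear[of 0] neg by auto
  qed
  show "P A"
  proof (cases "c = 0")
    case True
    then have ad: "(a = 1 \<or> a = -1) \<and> (d = 1 \<or> d = -1)"
      using det_A unit_int_cases[of a d] by simp
    then have "P (mat2 a 0 0 1)" "P (mat2 1 0 0 d)" using diag by auto
    then have "P (mat2 a 0 0 1 ** mat2 1 (a*b*d) 0 1 ** mat2 1 0 0 d)"
      using mult[OF mult[OF _ shear]] by blast
    moreover have "mat2 a 0 0 1 ** mat2 1 (a*b*d) 0 1 ** mat2 1 0 0 d = A"
      using ad True by (auto simp: A mat2_mult)
    ultimately show ?thesis by simp
  next
    case False
    obtain t u where a: "a = t*c + u" and u: "\<bar>u\<bar> < \<bar>c\<bar>"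
      using div_mult_mod_eq[of a c] abs_mod_less[OF False, of a] by metis
    define B where "B = mat2 c d u (b - t*d)"
    have "nat \<bar>B$2$1\<bar> < nat \<bar>A$2$1\<bar>" using u by (simp add: A B_def)
    moreover have "det B = - det A"
      by (simp add: A B_def det_mat2 a algebra_simps)
    ultimately have "P B" using less by (metis minus_equation_iff)
    then have "P (mat2 1 t 0 1 ** (mat2 0 1 1 0 ** B))" using mult shear swap by metis
    moreover have "mat2 1 t 0 1 ** (mat2 0 1 1 0 ** B) = A"
      by (simp add: A B_def mat2_mult a algebra_simps)
    ultimately show ?thesis by simp
  qed
qed

section \<open>Invariance of the Haar integral\<close>

definition doubly_periodic_2pi :: "(real \<times> real \<Rightarrow> 'a) \<Rightarrow> bool" where
  "doubly_periodic_2pi G \<longleftrightarrow> (\<forall>s t. G (s + 2*pi, t) = G (s, t) \<and> G (s, t + 2*pi) = G (s, t))"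

definition lin_map :: "int^2^2 \<Rightarrow> real \<times> real \<Rightarrow> real \<times> real" where
  "lin_map A x = (of_int (A$1$1) * fst x + of_int (A$1$2) * snd x,
                  of_int (A$2$1) * fst x + of_int (A$2$2) * snd x)"

abbreviation period_square :: "(real \<times> real) set" where
  "period_square \<equiv> cbox (0, 0) (2*pi, 2*pi)"

definition preserves_period_integral :: "int^2^2 \<Rightarrow> bool" where
  "preserves_period_integral A \<longleftrightarrow>
     (\<forall>G :: real \<times> real \<Rightarrow> complex. continuous_on UNIV G \<longrightarrow> doubly_periodic_2pi G \<longrightarrow>
        integral period_square (G \<circ> lin_map A) = integral period_square G)"

lemma doubly_periodic_2pi_int:
  assumes "doubly_periodic_2pi G"
  shows "G (s + 2*pi * of_int k, t + 2*pi * of_int l) = G (s, t)"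
proof -
  have "periodic_2pi (\<lambda>x. G (x, t'))" "periodic_2pi (\<lambda>y. G (s', y))" for s' t'
    using assms by (simp_all add: periodic_2pi_def doubly_periodic_2pi_def)
  then show ?thesis
    using periodic_2pi_int[of "\<lambda>x. G (x, t + 2*pi * of_int l)" s k]
      periodic_2pi_int[of "\<lambda>y. G (s, y)" t l] by simp
qed

lemma lin_map_mult: "lin_map (A ** B) x = lin_map A (lin_map B x)"
  by (simp add: lin_map_def matrix_matrix_mult_def sum_2 algebra_simps)

lemma continuous_on_lin_map: "continuous_on S (lin_map A)"
  unfolding lin_map_def by (intro continuous_intros)

lemma doubly_periodic_2pi_lin_map:
  assumes "doubly_periodic_2pi G"
  shows "doubly_periodic_2pi (G \<circ> lin_map A)"
  unfolding doubly_periodic_2pi_def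
proof (intro allI conjI)
  fix s t
  let ?s = "fst (lin_map A (s, t))" and ?t = "snd (lin_map A (s, t))"
  have "lin_map A (s + 2*pi, t) = (?s + 2*pi * of_int (A$1$1), ?t + 2*pi * of_int (A$2$1))"
    and "lin_map A (s, t + 2*pi) = (?s + 2*pi * of_int (A$1$2), ?t + 2*pi * of_int (A$2$2))"
    by (simp_all add: lin_map_def algebra_simps)
  then show "(G \<circ> lin_map A) (s + 2*pi, t) = (G \<circ> lin_map A) (s, t)"
    and "(G \<circ> lin_map A) (s, t + 2*pi) = (G \<circ> lin_map A) (s, t)"
    using doubly_periodic_2pi_int[OF assms] by simp_all
qed

lemma preserves_period_integral_mult:
  assumes "preserves_period_integral A" "preserves_period_integral B"
  shows "preserves_period_integral (A ** B)"
  unfolding preserves_period_integral_def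
proof (intro allI impI)
  fix G :: "real \<times> real \<Rightarrow> complex"
  assume cont: "continuous_on UNIV G" and per: "doubly_periodic_2pi G"
  have "G \<circ> lin_map (A ** B) = (G \<circ> lin_map A) \<circ> lin_map B" by (auto simp: lin_map_mult)
  moreover have "continuous_on UNIV (G \<circ> lin_map A)"
    using continuous_on_compose[OF continuous_on_lin_map continuous_on_subset[OF cont]] by auto
  ultimately have "integral period_square (G \<circ> lin_map (A ** B)) = integral period_square (G \<circ> lin_map A)"
    using assms(2) doubly_periodic_2pi_lin_map[OF per] unfolding preserves_period_integral_def by metis
  also have "\<dots> = integral period_square G"
    using assms(1) cont per unfolding preserves_period_integral_def by blast
  finally show "integral period_square (G \<circ> lin_map (A ** B)) = integral period_square G" .
qed

lemma integral_period_square: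
  fixes G :: "real \<times> real \<Rightarrow> complex"
  assumes "continuous_on UNIV G"
  shows "integral period_square G = integral {0..2*pi} (\<lambda>s. integral {0..2*pi} (\<lambda>t. G (s, t)))"
    and "integral period_square G = integral {0..2*pi} (\<lambda>t. integral {0..2*pi} (\<lambda>s. G (s, t)))"
proof -
  show "integral period_square G = integral {0..2*pi} (\<lambda>s. integral {0..2*pi} (\<lambda>t. G (s, t)))"
    using integral_prod_continuous[of 0 0 "2*pi" "2*pi" G] continuous_on_subset[OF assms] by simp
  also have "\<dots> = integral {0..2*pi} (\<lambda>t. integral {0..2*pi} (\<lambda>s. G (s, t)))"
    using integral_swap_continuous[of 0 0 "2*pi" "2*pi" "\<lambda>s t. G (s, t)"] continuous_on_subset[OF assms]
    by (simp add: case_prod_beta')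
  finally show "integral period_square G = integral {0..2*pi} (\<lambda>t. integral {0..2*pi} (\<lambda>s. G (s, t)))" .
qed

lemma preserves_period_integral_row:
  assumes e: "e = 1 \<or> e = -1"
  shows "preserves_period_integral (mat2 e b 0 1)"
  unfolding preserves_period_integral_def
proof (intro allI impI)
  fix G :: "real \<times> real \<Rightarrow> complex"
  assume cont: "continuous_on UNIV G" and per: "doubly_periodic_2pi G"
  have "continuous_on UNIV (G \<circ> lin_map (mat2 e b 0 1))"
    using continuous_on_compose[OF continuous_on_lin_map continuous_on_subset[OF cont]] by auto
  then have "integral period_square (G \<circ> lin_map (mat2 e b 0 1))
      = integral {0..2*pi} (\<lambda>t. integral {0..2*pi} (\<lambda>s. G (of_int e * s + of_int b * t, t)))"
    using integral_period_square(2) by (simp add: lin_map_def)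
  also have "\<dots> = integral {0..2*pi} (\<lambda>t. integral {0..2*pi} (\<lambda>s. G (s, t)))"
  proof (rule integral_cong)
    fix t
    have cont_slice: "continuous_on UNIV (\<lambda>s. G (s + c, t))" for c
      by (rule continuous_on_compose2[OF cont]) (auto intro!: continuous_intros)
    have per_slice: "periodic_2pi (\<lambda>s. G (s + c, t))" for c
      using per unfolding periodic_2pi_def doubly_periodic_2pi_def by (metis add.assoc add.commute)
    note slice = cont_slice[of 0, simplified] per_slice[of 0, simplified]
    note shifted = cont_slice[of "of_int b * t"] per_slice[of "of_int b * t"]
    show "integral {0..2*pi} (\<lambda>s. G (of_int e * s + of_int b * t, t)) = integral {0..2*pi} (\<lambda>s. G (s, t))"
      using e integral_periodic_reflect[OF shifted] integral_periodic_shift[OF slice] by auto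
  qed
  also have "\<dots> = integral period_square G" using integral_period_square(2)[OF cont] by simp
  finally show "integral period_square (G \<circ> lin_map (mat2 e b 0 1)) = integral period_square G" .
qed

lemma preserves_period_integral_swap: "preserves_period_integral (mat2 0 1 1 0)"
  unfolding preserves_period_integral_def
proof (intro allI impI)
  fix G :: "real \<times> real \<Rightarrow> complex"
  assume cont: "continuous_on UNIV G"
  have "continuous_on UNIV (G \<circ> lin_map (mat2 0 1 1 0))"
    using continuous_on_compose[OF continuous_on_lin_map continuous_on_subset[OF cont]] by auto
  then show "integral period_square (G \<circ> lin_map (mat2 0 1 1 0)) = integral period_square G"
    using integral_period_square[OF cont] integral_period_square(1) by (simp add: lin_map_def)
qed

lemma preserves_period_integral_GL2Z:
  assumes "det A = 1 \<or> det A = -1"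
  shows "preserves_period_integral A"
  by (rule GL2Z_generated[OF _ _ _ _ assms])
    (auto intro: preserves_period_integral_row preserves_period_integral_swap
      preserves_period_integral_mult)

section \<open>Fourier coefficients\<close>

lemma cis_in_torus [simp]: "(cis s, cis t) \<in> torus"
  by (simp add: torus_def)

lemma fourier2_cong:
  assumes "\<And>x. x \<in> torus \<Longrightarrow> f x = g x"
  shows "fourier2 f m n = fourier2 g m n"
  unfolding fourier2_def using assms by (simp add: case_prod_beta')

lemma cis_add_int_2pi: "cis (x + 2*pi * of_int k) = cis x"
  using cis_multiple_2pi[of "of_int k"] by (simp add: cis_mult[symmetric])

lemma integral_cis_int:
  "integral {0..2*pi} (\<lambda>s. cis (of_int k * s)) = (if k = 0 then 2*pi else 0)"
proof (cases "k = 0")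
  case True
  then show ?thesis by (simp add: scaleR_conv_of_real)
next
  case False
  define F where "F = (\<lambda>s::real. cis (of_int k * s) / (\<i> * of_int k))"
  have "(F has_vector_derivative cis (of_int k * x)) (at x within {0..2*pi})" for x
  proof -
    have "((\<lambda>s. cis (of_int k * s)) has_vector_derivative (of_int k * (\<i> * cis (of_int k * x))))
        (at x within {0..2*pi})"
      unfolding has_vector_derivative_def
      by (rule derivative_eq_intros has_derivative_cis | simp add: scaleR_conv_of_real algebra_simps)+
    from has_vector_derivative_divide[OF this, of "\<i> * of_int k"] show ?thesis
      using False by (simp add: F_def field_simps)
  qed
  then have "((\<lambda>s. cis (of_int k * s)) has_integral (F (2*pi) - F 0)) {0..2*pi}"
    by (intro fundamental_theorem_of_calculus) auto
  moreover have "F (2*pi) = F 0"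
    using cis_add_int_2pi[of 0 k] by (simp add: F_def mult.commute)
  ultimately show ?thesis using False by (simp add: integral_unique)
qed

definition monomial :: "int \<Rightarrow> int \<Rightarrow> complex \<times> complex \<Rightarrow> complex" where
  "monomial m n = (\<lambda>(z, w). z powi m * w powi n)"

lemma fourier2_monomial: "fourier2 (monomial m n) j l = (if m = j \<and> n = l then 1 else 0)"
proof -
  define G where "G = (\<lambda>x::real \<times> real. cis (of_int (m - j) * fst x) * cis (of_int (n - l) * snd x))"
  have "(\<lambda>(s, t). monomial m n (cis s, cis t) * cis (- (of_int j * s + of_int l * t))) = G"
    by (auto simp: G_def monomial_def cis_power_int cis_mult algebra_simps)
  moreover have "continuous_on UNIV G"
    unfolding G_def by (intro continuous_intros)
  then have "integral period_square G
      = integral {0..2*pi} (\<lambda>s. cis (of_int (m - j) * s))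
        * integral {0..2*pi} (\<lambda>t. cis (of_int (n - l) * t))"
    using integral_period_square(1) by (simp add: G_def)
  ultimately show ?thesis
    unfolding fourier2_def using integral_cis_int[of "m - j"] integral_cis_int[of "n - l"]
    by (simp add: power2_eq_square scaleR_conv_of_real)
qed

lemma doubly_periodic_2pi_fourier_integrand:
  "doubly_periodic_2pi (\<lambda>x. f (cis (fst x), cis (snd x)) * cis (- (of_int m * fst x + of_int n * snd x)))"
    (is "doubly_periodic_2pi ?G")
  unfolding doubly_periodic_2pi_def
proof (intro allI conjI)
  fix s t :: real
  let ?x = "- (of_int m * s + of_int n * t)"
  have "cis (- (of_int m * (s + 2*pi) + of_int n * t)) = cis ?x"
    and "cis (- (of_int m * s + of_int n * (t + 2*pi))) = cis ?x"
    using cis_add_int_2pi[of ?x "- m"] cis_add_int_2pi[of ?x "- n"] by (simp_all add: algebra_simps)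
  moreover have "cis (s + 2*pi) = cis s" "cis (t + 2*pi) = cis t"
    using cis_add_int_2pi[of _ 1] by simp_all
  ultimately show "?G (s + 2*pi, t) = ?G (s, t)" "?G (s, t + 2*pi) = ?G (s, t)"
    by (simp_all only: fst_conv snd_conv)
qed

lemma fourier2_piA:
  assumes f: "continuous_on torus f" and BA: "B ** A = mat 1" and det: "det A = 1 \<or> det A = -1"
  shows "fourier2 (piA A f) w1 w2 = fourier2 f (B$1$1*w1 + B$2$1*w2) (B$1$2*w1 + B$2$2*w2)"
proof -
  define u1 u2 where "u1 = B$1$1*w1 + B$2$1*w2" and "u2 = B$1$2*w1 + B$2$2*w2"
  define G where "G = (\<lambda>x. f (cis (fst x), cis (snd x)) * cis (- (of_int u1 * fst x + of_int u2 * snd x)))"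
  have w: "u1 * A$1$1 + u2 * A$2$1 = w1" "u1 * A$1$2 + u2 * A$2$2 = w2"
    using mat2_mult_eq_one[OF BA] unfolding u1_def u2_def by algebra+
  have exponent: "of_int u1 * fst (lin_map A x) + of_int u2 * snd (lin_map A x)
      = of_int w1 * fst x + (of_int w2 * snd x :: real)" for x
    unfolding lin_map_def w[symmetric] by (simp add: algebra_simps)
  have "piA A f (cis s, cis t) = f (cis (fst (lin_map A (s, t))), cis (snd (lin_map A (s, t))))" for s t
    by (simp add: piA_def phiA_def lin_map_def cis_power_int cis_mult mult.commute)
  moreover have "G (lin_map A (s, t))
      = f (cis (fst (lin_map A (s, t))), cis (snd (lin_map A (s, t)))) * cis (- (of_int w1 * s + of_int w2 * t))"
    for s t unfolding G_def exponent by simp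
  ultimately have integrand:
    "(\<lambda>(s, t). piA A f (cis s, cis t) * cis (- (of_int w1 * s + of_int w2 * t))) = G \<circ> lin_map A"
    by auto
  have "continuous_on UNIV G"
    unfolding G_def by (intro continuous_intros continuous_on_compose2[OF f]) auto
  moreover have "doubly_periodic_2pi G"
    unfolding G_def by (rule doubly_periodic_2pi_fourier_integrand)
  ultimately have "integral period_square (G \<circ> lin_map A) = integral period_square G"
    using preserves_period_integral_GL2Z[OF det] unfolding preserves_period_integral_def by blast
  then show ?thesis
    unfolding fourier2_def integrand u1_def[symmetric] u2_def[symmetric] by (simp add: G_def case_prod_beta')
qed

section \<open>Eigenvalues at \<open>(1, \<alpha>)\<close>\<close>

definition alpha_eigenvalue :: "real \<Rightarrow> int^2^2 \<Rightarrow> real \<Rightarrow> bool" where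
  "alpha_eigenvalue \<alpha> A l \<longleftrightarrow>
     of_int (A$1$1) + of_int (A$1$2) * \<alpha> = l \<and> of_int (A$2$1) + of_int (A$2$2) * \<alpha> = l * \<alpha>"

lemma alpha_eigenvalue_one: "alpha_eigenvalue \<alpha> (mat 1) 1"
  by (simp add: alpha_eigenvalue_def mat_def)

lemma alpha_eigenvalue_mult:
  assumes "alpha_eigenvalue \<alpha> A l" "alpha_eigenvalue \<alpha> B l'"
  shows "alpha_eigenvalue \<alpha> (A ** B) (l * l')"
proof -
  from assms have A1: "of_int (A$1$1) + of_int (A$1$2) * \<alpha> = l"
    and A2: "of_int (A$2$1) + of_int (A$2$2) * \<alpha> = l * \<alpha>"
    and B1: "of_int (B$1$1) + of_int (B$1$2) * \<alpha> = l'"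
    and B2: "of_int (B$2$1) + of_int (B$2$2) * \<alpha> = l' * \<alpha>"
    by (simp_all add: alpha_eigenvalue_def)
  have row: "of_int ((A ** B)$i$1) + of_int ((A ** B)$i$2) * \<alpha> = l' * (of_int (A$i$1) + of_int (A$i$2) * \<alpha>)"
    for i
  proof -
    have "of_int ((A ** B)$i$1) + of_int ((A ** B)$i$2) * \<alpha>
        = of_int (A$i$1) * (of_int (B$1$1) + of_int (B$1$2) * \<alpha>)
          + of_int (A$i$2) * (of_int (B$2$1) + of_int (B$2$2) * \<alpha>)"
      by (simp add: matrix_matrix_mult_def sum_2 algebra_simps)
    also have "\<dots> = l' * (of_int (A$i$1) + of_int (A$i$2) * \<alpha>)"
      unfolding B1 B2 by (simp add: algebra_simps)
    finally show ?thesis .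
  qed
  show ?thesis unfolding alpha_eigenvalue_def row A1 A2 by simp
qed

lemma alpha_eigenvalue_inverse:
  assumes BA: "B ** A = mat 1" and A: "alpha_eigenvalue \<alpha> A l" and "l \<noteq> 0"
  shows "alpha_eigenvalue \<alpha> B (1 / l)"
proof -
  from A have A1: "of_int (A$1$1) + of_int (A$1$2) * \<alpha> = l"
    and A2: "of_int (A$2$1) + of_int (A$2$2) * \<alpha> = l * \<alpha>"
    by (simp_all add: alpha_eigenvalue_def)
  have e: "real_of_int (B$1$1) * of_int (A$1$1) + of_int (B$1$2) * of_int (A$2$1) = 1"
    "real_of_int (B$1$1) * of_int (A$1$2) + of_int (B$1$2) * of_int (A$2$2) = 0"
    "real_of_int (B$2$1) * of_int (A$1$1) + of_int (B$2$2) * of_int (A$2$1) = 0"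
    "real_of_int (B$2$1) * of_int (A$1$2) + of_int (B$2$2) * of_int (A$2$2) = 1"
    using mat2_mult_eq_one[OF BA] by (simp_all flip: of_int_mult of_int_add)
  have row: "l * (of_int (B$i$1) + of_int (B$i$2) * \<alpha>)
      = of_int (B$i$1) * (of_int (A$1$1) + of_int (A$1$2) * \<alpha>)
        + of_int (B$i$2) * (of_int (A$2$1) + of_int (A$2$2) * \<alpha>)" for i
    unfolding A1 A2 by (simp add: algebra_simps)
  have "l * (of_int (B$1$1) + of_int (B$1$2) * \<alpha>) = 1"
    unfolding row using e(1,2) by algebra
  moreover have "l * (of_int (B$2$1) + of_int (B$2$2) * \<alpha>) = \<alpha>"
    unfolding row using e(3,4) by algebra
  ultimately show ?thesis using \<open>l \<noteq> 0\<close> by (simp add: alpha_eigenvalue_def field_simps)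
qed

lemma alpha_eigenvalue_matzpow:
  assumes "alpha_eigenvalue \<alpha> G l" "l \<noteq> 0" "det G = 1 \<or> det G = -1"
  shows "alpha_eigenvalue \<alpha> (matzpow G n) (l powi n)"
proof -
  have pow: "alpha_eigenvalue \<alpha> (matpow M m) (\<mu> ^ m)" if "alpha_eigenvalue \<alpha> M \<mu>" for M \<mu> m
    using that by (induction m) (auto simp: alpha_eigenvalue_one intro: alpha_eigenvalue_mult)
  have "alpha_eigenvalue \<alpha> (mat2_inv G) (1 / l)"
    using alpha_eigenvalue_inverse[OF mat2_inv_mult(1)[OF assms(3)] assms(1,2)] .
  then show ?thesis
    using pow[OF assms(1)] pow[of "mat2_inv G" "1 / l"]
    by (simp add: matzpow_def power_int_def power_one_over inverse_eq_divide)
qed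

lemma irrational_int_combination_eq_0:
  assumes "\<alpha> \<notin> \<rat>" "real_of_int a + real_of_int b * \<alpha> = 0"
  shows "a = 0 \<and> b = 0"
proof (cases "b = 0")
  case True
  then show ?thesis using assms by simp
next
  case False
  then have "\<alpha> = - of_int a / of_int b" using assms(2) by (simp add: field_simps)
  then show ?thesis using assms(1) by simp
qed

lemma alpha_eigenvalue_unique:
  assumes "\<alpha> \<notin> \<rat>" "alpha_eigenvalue \<alpha> A l" "alpha_eigenvalue \<alpha> B l"
  shows "A = B"
proof -
  have "real_of_int (A$i$1 - B$i$1) + of_int (A$i$2 - B$i$2) * \<alpha> = 0" if "i = 1 \<or> i = 2" for i
    using assms(2,3) that by (auto simp: alpha_eigenvalue_def algebra_simps)
  then have "A$i$1 = B$i$1 \<and> A$i$2 = B$i$2" if "i = 1 \<or> i = 2" for i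
    using irrational_int_combination_eq_0[OF assms(1)] that by fastforce
  then show ?thesis by (metis mat2_eta)
qed

section \<open>Isometric automorphisms of \<open>A_alg \<alpha>\<close>\<close>

lemma powi_mult_powi_powi:
  fixes z w :: complex
  assumes "z \<noteq> 0" "w \<noteq> 0"
  shows "(z powi a * w powi b) powi e * (z powi c * w powi d) powi g
    = z powi (a*e + c*g) * w powi (b*e + d*g)"
  using assms by (simp add: power_int_mult_distrib power_int_mult[symmetric] power_int_add algebra_simps)

lemma torus_nonzero: "(z, w) \<in> torus \<Longrightarrow> z \<noteq> 0 \<and> w \<noteq> 0"
  by (auto simp: torus_def)

lemma phiA_torus: "x \<in> torus \<Longrightarrow> phiA A x \<in> torus"
  by (auto simp: torus_def phiA_def norm_mult norm_power_int)

lemma phiA_phiA: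
  assumes "x \<in> torus"
  shows "phiA B (phiA A x) = phiA (B ** A) x"
proof -
  obtain z w where x: "x = (z, w)" by (cases x)
  with assms torus_nonzero show ?thesis
    by (simp add: phiA_def powi_mult_powi_powi matrix_matrix_mult_def sum_2 algebra_simps)
qed

lemma phiA_one: "phiA (mat 1) x = x"
  by (auto simp: phiA_def mat_def)

lemma continuous_on_phiA: "continuous_on torus (phiA A)"
proof -
  have "phiA A = (\<lambda>x. (fst x powi (A$1$1) * snd x powi (A$1$2), fst x powi (A$2$1) * snd x powi (A$2$2)))"
    by (auto simp: phiA_def)
  moreover have "continuous_on torus \<dots>"
    by (intro continuous_intros) (auto simp: torus_def)
  ultimately show ?thesis by simp
qed

lemma continuous_on_piA: "continuous_on torus f \<Longrightarrow> continuous_on torus (piA A f)"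
  unfolding piA_def
  by (rule continuous_on_compose[OF continuous_on_phiA continuous_on_subset]) (auto intro: phiA_torus)

lemma phiA_image_torus:
  assumes "det A = 1 \<or> det A = -1"
  shows "phiA A ` torus = torus"
proof
  show "phiA A ` torus \<subseteq> torus" using phiA_torus by blast
  show "torus \<subseteq> phiA A ` torus"
  proof
    fix x assume x: "x \<in> torus"
    then have "x = phiA A (phiA (mat2_inv A) x)"
      using phiA_phiA[OF x] mat2_inv_mult(2)[OF assms] phiA_one by simp
    then show "x \<in> phiA A ` torus" using phiA_torus[OF x] by blast
  qed
qed

lemma supnorm_piA:
  assumes "det A = 1 \<or> det A = -1"
  shows "supnorm (piA A f) = supnorm f"
proof -
  have "(\<lambda>x. norm (piA A f x)) ` torus = (\<lambda>x. norm (f x)) ` phiA A ` torus"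
    by (simp add: piA_def image_image)
  then show ?thesis unfolding supnorm_def phiA_image_torus[OF assms] by simp
qed

lemma piA_in_A_alg:
  assumes A: "GL2Z A" and l: "alpha_eigenvalue \<alpha> A l" "l > 0" and f: "f \<in> A_alg \<alpha>"
  shows "piA A f \<in> A_alg \<alpha>"
proof -
  define B where "B = mat2_inv A"
  have det: "det A = 1 \<or> det A = -1" using A by (simp add: GL2Z_def)
  have BA: "B ** A = mat 1" using mat2_inv_mult[OF det] by (simp add: B_def)
  have B: "alpha_eigenvalue \<alpha> B (1 / l)" using alpha_eigenvalue_inverse[OF BA l(1)] l(2) by simp
  have fc: "continuous_on torus f" using f by (simp add: A_alg_def)
  show ?thesis unfolding A_alg_def
  proof (intro CollectI conjI allI impI)
    show "continuous_on torus (piA A f)" using continuous_on_piA[OF fc] .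
    fix m n :: int
    assume mn: "real_of_int m + \<alpha> * real_of_int n < 0"
    define u1 u2 where "u1 = B$1$1*m + B$2$1*n" and "u2 = B$1$2*m + B$2$2*n"
    have "real_of_int u1 + \<alpha> * of_int u2
        = of_int m * (of_int (B$1$1) + of_int (B$1$2) * \<alpha>)
          + of_int n * (of_int (B$2$1) + of_int (B$2$2) * \<alpha>)"
      unfolding u1_def u2_def by (simp add: algebra_simps)
    also have "\<dots> = (of_int m + \<alpha> * of_int n) / l"
      using B by (simp add: alpha_eigenvalue_def add_divide_distrib algebra_simps)
    also have "\<dots> < 0" using mn l(2) by (simp add: divide_neg_pos)
    finally have "fourier2 f u1 u2 = 0" using f by (simp add: A_alg_def)
    then show "fourier2 (piA A f) m n = 0"
      using fourier2_piA[OF fc BA det] unfolding u1_def u2_def by simp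
  qed
qed

lemma iso_aut_if_alpha_eigenvalue:
  assumes A: "GL2Z A" and l: "alpha_eigenvalue \<alpha> A l" "l > 0"
  shows "iso_aut \<alpha> A"
proof -
  define B where "B = mat2_inv A"
  have det: "det A = 1 \<or> det A = -1" using A by (simp add: GL2Z_def)
  have BA: "B ** A = mat 1" using mat2_inv_mult[OF det] by (simp add: B_def)
  have "GL2Z B" using det_mat2_inv[OF det] A by (simp add: GL2Z_def B_def)
  moreover have "alpha_eigenvalue \<alpha> B (1 / l)" using alpha_eigenvalue_inverse[OF BA l(1)] l(2) by simp
  ultimately have "piA B g \<in> A_alg \<alpha>" if "g \<in> A_alg \<alpha>" for g
    using piA_in_A_alg l(2) that by simp
  moreover have "\<forall>x\<in>torus. piA A (piA B g) x = g x" for g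
    by (simp add: piA_def phiA_phiA BA phiA_one)
  ultimately show ?thesis
    unfolding iso_aut_def using piA_in_A_alg[OF A l] supnorm_piA[OF det] by blast
qed

lemma monomial_in_A_alg:
  assumes "0 \<le> of_int m + \<alpha> * of_int n"
  shows "monomial m n \<in> A_alg \<alpha>"
  unfolding A_alg_def
proof (intro CollectI conjI allI impI)
  have "monomial m n = (\<lambda>x. fst x powi m * snd x powi n)" by (auto simp: monomial_def)
  moreover have "continuous_on torus \<dots>"
    by (intro continuous_intros) (auto simp: torus_def)
  ultimately show "continuous_on torus (monomial m n)" by simp
  fix j l :: int
  assume "real_of_int j + \<alpha> * real_of_int l < 0"
  then show "fourier2 (monomial m n) j l = 0" using assms by (auto simp: fourier2_monomial)
qed

lemma piA_monomial:
  assumes "x \<in> torus"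
  shows "piA A (monomial m n) x = monomial (A$1$1*m + A$2$1*n) (A$1$2*m + A$2$2*n) x"
proof -
  obtain z w where x: "x = (z, w)" by (cases x)
  with assms torus_nonzero show ?thesis by (simp add: piA_def phiA_def monomial_def powi_mult_powi_powi)
qed

text \<open>A linear functional that is nonnegative on the lattice points of the half-plane
  \<open>m + \<alpha> n \<ge> 0\<close> is a nonnegative multiple of \<open>m + \<alpha> n\<close>: otherwise it is negative at a lattice
  point far out along the boundary line, which lattice points approach within distance 1.\<close>
lemma lattice_halfplane_nonneg_imp_proportional:
  fixes u1 u2 \<alpha> :: real
  assumes H: "\<And>m n::int. 0 \<le> of_int m + \<alpha> * of_int n \<Longrightarrow> 0 \<le> of_int m * u1 + of_int n * u2"
  shows "u2 = \<alpha> * u1 \<and> 0 \<le> u1"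
proof -
  have u1: "0 \<le> u1" using H[of 1 0] by simp
  define \<delta> where "\<delta> = u2 - \<alpha> * u1"
  have "\<delta> = 0"
  proof (rule ccontr)
    assume "\<delta> \<noteq> 0"
    obtain N0 :: int where "u1 / \<bar>\<delta>\<bar> < of_int N0" using ex_less_of_int by blast
    then have N0: "u1 < of_int N0 * \<bar>\<delta>\<bar>" using \<open>\<delta> \<noteq> 0\<close> by (simp add: field_simps)
    define n where "n = (if \<delta> > 0 then - N0 else N0)"
    have n: "of_int n * \<delta> = - of_int N0 * \<bar>\<delta>\<bar>" by (simp add: n_def)
    define m where "m = \<lceil>- \<alpha> * of_int n\<rceil>"
    have m: "0 \<le> of_int m + \<alpha> * of_int n" "of_int m + \<alpha> * of_int n < 1"
      unfolding m_def by linarith+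
    have "of_int m * u1 + of_int n * u2 = u1 * (of_int m + \<alpha> * of_int n) + of_int n * \<delta>"
      by (simp add: \<delta>_def algebra_simps)
    also have "\<dots> \<le> u1 + of_int n * \<delta>"
      using m u1 by (simp add: mult_left_le)
    also have "\<dots> < 0" using N0 n by simp
    finally show False using H[OF m(1)] by simp
  qed
  then show ?thesis using u1 by (simp add: \<delta>_def)
qed

lemma alpha_eigenvalue_if_iso_aut:
  assumes irr: "\<alpha> \<notin> \<rat>" and A: "GL2Z A" and iso: "iso_aut \<alpha> A"
  shows "\<exists>l>0. alpha_eigenvalue \<alpha> A l"
proof -
  define u1 where "u1 = of_int (A$1$1) + of_int (A$1$2) * \<alpha>"
  define u2 where "u2 = of_int (A$2$1) + of_int (A$2$2) * \<alpha>"
  have "0 \<le> of_int m * u1 + of_int n * u2" if mn: "0 \<le> of_int m + \<alpha> * of_int n" for m n :: int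
  proof -
    define j l where "j = A$1$1*m + A$2$1*n" and "l = A$1$2*m + A$2$2*n"
    have "piA A (monomial m n) \<in> A_alg \<alpha>" using iso monomial_in_A_alg[OF mn] by (simp add: iso_aut_def)
    moreover have "fourier2 (piA A (monomial m n)) j l = 1"
      using fourier2_cong[of "piA A (monomial m n)" "monomial j l"] piA_monomial fourier2_monomial
      unfolding j_def l_def by simp
    ultimately have "\<not> real_of_int j + \<alpha> * of_int l < 0" by (auto simp: A_alg_def)
    moreover have "real_of_int j + \<alpha> * of_int l = of_int m * u1 + of_int n * u2"
      unfolding j_def l_def u1_def u2_def by (simp add: algebra_simps)
    ultimately show ?thesis by simp
  qed
  then have u: "u2 = \<alpha> * u1 \<and> 0 \<le> u1" by (rule lattice_halfplane_nonneg_imp_proportional)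
  have "u1 \<noteq> 0"
  proof
    assume "u1 = 0"
    then have "A$1$1 = 0 \<and> A$1$2 = 0" "A$2$1 = 0 \<and> A$2$2 = 0"
      using u irrational_int_combination_eq_0[OF irr] unfolding u1_def u2_def by auto
    then show False using A by (simp add: GL2Z_def det_2)
  qed
  then show ?thesis
    using u unfolding alpha_eigenvalue_def u1_def u2_def by (auto simp: mult.commute)
qed

section \<open>Units of \<open>\<int>[\<surd>N]\<close>\<close>

definition pell_unit :: "int \<Rightarrow> int \<Rightarrow> real \<Rightarrow> bool" where
  "pell_unit N e u \<longleftrightarrow> (\<exists>x y. u = of_int x + of_int y * sqrt (of_int N) \<and> x^2 - N * y^2 = e)"

definition quadratic_unit :: "int \<Rightarrow> real \<Rightarrow> bool" where
  "quadratic_unit N u \<longleftrightarrow> pell_unit N 1 u \<or> pell_unit N (-1) u"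

lemma pell_unit_mult:
  assumes "0 \<le> N" "pell_unit N e u" "pell_unit N e' v"
  shows "pell_unit N (e * e') (u * v)"
proof -
  define \<omega> where "\<omega> = sqrt (of_int N)"
  have \<omega>: "\<omega> * \<omega> = of_int N" using assms(1) by (simp add: \<omega>_def)
  obtain x y x' y' where u: "u = of_int x + of_int y * \<omega>" "x^2 - N * y^2 = e"
    and v: "v = of_int x' + of_int y' * \<omega>" "x'^2 - N * y'^2 = e'"
    using assms(2,3) by (auto simp: pell_unit_def \<omega>_def)
  have "u * v = of_int x * of_int x' + of_int N * of_int y * of_int y'
      + (of_int x * of_int y' + of_int x' * of_int y) * \<omega>"
    unfolding u v by (simp add: algebra_simps flip: \<omega>)
  then have "u * v = of_int (x*x' + N*y*y') + of_int (x*y' + x'*y) * \<omega>" by simp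
  moreover have "(x*x' + N*y*y')^2 - N * (x*y' + x'*y)^2 = e * e'"
    unfolding u(2)[symmetric] v(2)[symmetric] by algebra
  ultimately show ?thesis unfolding pell_unit_def \<omega>_def by blast
qed

lemma pell_unit_inverse:
  assumes "0 \<le> N" "pell_unit N e u" "e = 1 \<or> e = -1"
  shows "pell_unit N e (1 / u)"
proof -
  define \<omega> where "\<omega> = sqrt (of_int N)"
  have \<omega>: "\<omega> * \<omega> = of_int N" using assms(1) by (simp add: \<omega>_def)
  obtain x y where u: "u = of_int x + of_int y * \<omega>" "x^2 - N * y^2 = e"
    using assms(2) by (auto simp: pell_unit_def \<omega>_def)
  have e2: "real_of_int e * of_int e = 1" using assms(3) by auto
  have "u * (of_int e * of_int x - of_int e * of_int y * \<omega>)
      = of_int e * (of_int x^2 - of_int N * of_int y^2)"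
    unfolding u(1) by (simp add: algebra_simps power2_eq_square flip: \<omega>)
  also have "\<dots> = 1" using arg_cong[OF u(2), of real_of_int] e2 by simp
  finally have "inverse u = of_int e * of_int x - of_int e * of_int y * \<omega>"
    by (rule inverse_unique)
  then have "1 / u = of_int (e*x) + of_int (- e*y) * \<omega>" by (simp add: inverse_eq_divide)
  moreover have "(e*x)^2 - N * (- e*y)^2 = e" using u(2) assms(3) by (auto simp: power2_eq_square)
  ultimately show ?thesis unfolding pell_unit_def \<omega>_def by blast
qed

lemma quadratic_unit_mult:
  "0 \<le> N \<Longrightarrow> quadratic_unit N u \<Longrightarrow> quadratic_unit N v \<Longrightarrow> quadratic_unit N (u * v)"
  unfolding quadratic_unit_def using pell_unit_mult[of N] by fastforce

lemma quadratic_unit_powi: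
  assumes "0 \<le> N" "quadratic_unit N u"
  shows "quadratic_unit N (u powi n)"
proof -
  have pow: "quadratic_unit N (v ^ m)" if "quadratic_unit N v" for v m
  proof (induction m)
    case 0
    have "pell_unit N 1 1" unfolding pell_unit_def by (rule exI[of _ 1], rule exI[of _ 0]) simp
    then show ?case by (simp add: quadratic_unit_def)
  qed (use quadratic_unit_mult[OF assms(1) that] in simp)
  have "quadratic_unit N (1 / u)"
    using assms pell_unit_inverse[of N] by (auto simp: quadratic_unit_def)
  then show ?thesis
    using pow[OF assms(2)] pow[of "1 / u"] by (simp add: power_int_def inverse_eq_divide)
qed

lemma pell_unit_gt_1_pos:
  assumes "0 < N" "u = of_int x + of_int y * sqrt (of_int N)" "x^2 - N * y^2 = e"
    and "e = 1 \<or> e = -1" "u > 1"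
  shows "x > 0 \<and> y > 0"
proof -
  define u' where "u' = of_int x - of_int y * sqrt (of_int N)"
  have "u * u' = of_int (x^2 - N * y^2)"
    using assms(1) unfolding assms(2) u'_def by (simp add: algebra_simps power2_eq_square)
  then have "u' = of_int e / u" using assms(3,5) by (simp add: field_simps)
  then have "\<bar>u'\<bar> = 1 / u" using assms(4,5) by auto
  then have "\<bar>u'\<bar> < 1" using assms(5) by simp
  then have "of_int x > (0::real)" "of_int y * sqrt (of_int N) > 0"
    using assms(5) unfolding assms(2) u'_def by auto
  then show ?thesis using assms(1) by (simp add: zero_less_mult_iff)
qed

lemma fund_sol_le_pell_unit:
  assumes N: "0 < N" and e: "e = 1 \<or> e = -1" and fund: "fund_sol N e x1 y1"
    and u: "pell_unit N e u" "u > 1"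
  shows "of_int x1 + of_int y1 * sqrt (of_int N) \<le> u"
proof -
  obtain x y where xy: "u = of_int x + of_int y * sqrt (of_int N)" "x^2 - N * y^2 = e"
    using u(1) by (auto simp: pell_unit_def)
  have pos: "x > 0" "y > 0" using pell_unit_gt_1_pos[OF N xy e u(2)] by auto
  have x1: "x1 > 0" "y1 > 0" "x1^2 - N * y1^2 = e" "x1 \<le> x"
    using fund pos xy(2) by (auto simp: fund_sol_def)
  then have "x1^2 \<le> x^2" by (simp add: power_mono)
  then have "y1^2 \<le> y^2" using x1(3) xy(2) N by (smt (verit) mult_le_cancel_left_pos)
  then have "y1 \<le> y" using pos x1 by (simp add: abs_le_square_iff[symmetric])
  then show ?thesis using x1(4) N unfolding xy(1) by (simp add: mult_right_mono add_mono)
qed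

lemma exists_powi_bracket:
  fixes \<epsilon> u :: real
  assumes "\<epsilon> > 1" "u > 0"
  shows "\<exists>n::int. \<epsilon> powi n \<le> u \<and> u < \<epsilon> powi (n + 1)"
proof -
  define n where "n = \<lfloor>ln u / ln \<epsilon>\<rfloor>"
  have "ln \<epsilon> > 0" using assms by simp
  then have "of_int n * ln \<epsilon> \<le> ln u" "ln u < (of_int n + 1) * ln \<epsilon>"
    using floor_divide_lower floor_divide_upper unfolding n_def by blast+
  then have "exp (of_int n * ln \<epsilon>) \<le> u" "u < exp (of_int (n + 1) * ln \<epsilon>)"
    using assms by (metis exp_le_cancel_iff exp_ln, metis exp_less_cancel_iff exp_ln of_int_add of_int_1)
  then show ?thesis using assms(1) exp_power_int[of "ln \<epsilon>"] by auto
qed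

text \<open>Any unit is brought into \<open>[1, \<epsilon>)\<close> by a power of \<open>\<epsilon>\<close>, and the only unit there is 1.\<close>
lemma powers_of_least_unit:
  assumes N: "0 \<le> N" and \<epsilon>: "\<epsilon> > 1" "quadratic_unit N \<epsilon>"
    and least: "\<And>v. v > 1 \<Longrightarrow> quadratic_unit N v \<Longrightarrow> \<epsilon> \<le> v"
    and u: "u > 0" "quadratic_unit N u"
  shows "\<exists>n::int. u = \<epsilon> powi n"
proof -
  obtain n where n: "\<epsilon> powi n \<le> u" "u < \<epsilon> powi (n + 1)"
    using exists_powi_bracket[OF \<epsilon>(1) u(1)] by blast
  define v where "v = u * \<epsilon> powi (- n)"
  have pos: "\<epsilon> powi n > 0" using \<epsilon>(1) by simp
  have inv: "\<epsilon> powi (- n) = 1 / \<epsilon> powi n" by (simp add: power_int_minus divide_inverse)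
  have "v \<ge> 1" using n pos by (simp add: v_def inv)
  moreover have "v < \<epsilon>"
    using n pos \<epsilon>(1) by (simp add: v_def inv power_int_add field_simps)
  moreover have "quadratic_unit N v"
    unfolding v_def by (intro quadratic_unit_mult quadratic_unit_powi N u(2) \<epsilon>(2))
  ultimately have "v = 1" using least[of v] by force
  then show ?thesis using pos by (auto simp: v_def inv field_simps)
qed

text \<open>If \<open>x\<^sup>2 - N y\<^sup>2 = -1\<close> is solvable, a unit \<open>v > 1\<close> of norm 1 below the fundamental one
  \<open>\<epsilon>\<close> of norm \<open>-1\<close> would give the unit \<open>\<epsilon>/v\<close> of norm \<open>-1\<close> in \<open>(1, \<epsilon>)\<close>.\<close>
lemma fundamental_unit_generates:
  assumes N: "0 < N" and fund: "fund_sol N e x1 y1"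
    and e: "e = -1 \<or> (e = 1 \<and> \<not> (\<exists>x y. x^2 - N * y^2 = -1))"
    and u: "u > 0" "quadratic_unit N u"
  shows "\<exists>n::int. u = (of_int x1 + of_int y1 * sqrt (of_int N)) powi n"
proof (rule powers_of_least_unit[OF _ _ _ _ u])
  define \<epsilon> where "\<epsilon> = of_int x1 + of_int y1 * sqrt (of_int N)"
  have x1: "x1 > 0" "y1 > 0" "x1^2 - N * y1^2 = e" using fund by (auto simp: fund_sol_def)
  moreover have "of_int y1 * sqrt (of_int N) > 0" using x1 N by simp
  ultimately show "\<epsilon> > 1" unfolding \<epsilon>_def by linarith
  have \<epsilon>: "pell_unit N e \<epsilon>" using x1 unfolding pell_unit_def \<epsilon>_def by blast
  then show "quadratic_unit N \<epsilon>" using e by (auto simp: quadratic_unit_def)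
  have e_le: "\<epsilon> \<le> v" if "v > 1" "pell_unit N e v" for v
    using fund_sol_le_pell_unit[OF N _ fund that(2,1)] e unfolding \<epsilon>_def by blast
  show "\<epsilon> \<le> v" if v: "v > 1" "quadratic_unit N v" for v
  proof (rule ccontr)
    assume "\<not> \<epsilon> \<le> v"
    with e_le v(1) have not_e: "\<not> pell_unit N e v" by blast
    have e: "e = -1"
    proof (rule ccontr)
      assume "e \<noteq> -1"
      with e have "e = 1" "\<not> (\<exists>x y. x^2 - N * y^2 = -1)" by auto
      then show False using v(2) not_e by (auto simp: quadratic_unit_def pell_unit_def)
    qed
    then have v1: "pell_unit N 1 v" using v(2) not_e by (auto simp: quadratic_unit_def)
    have "pell_unit N (-1) (\<epsilon> * (1 / v))"
      using pell_unit_mult[OF _ \<epsilon> pell_unit_inverse[OF _ v1]] N e by simp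
    moreover have "\<epsilon> * (1 / v) > 1" "\<epsilon> * (1 / v) < \<epsilon>"
      using \<open>\<not> \<epsilon> \<le> v\<close> v(1) \<open>1 < \<epsilon>\<close> by (simp_all add: field_simps)
    ultimately show False using e_le e by fastforce
  qed
qed (use N in simp)

section \<open>Quadratic irrationals\<close>

definition pell_matrix :: "int \<Rightarrow> int \<Rightarrow> int \<Rightarrow> int \<Rightarrow> int \<Rightarrow> int^2^2" where
  "pell_matrix R Q C x y = mat2 (- R * y + x) (Q * y) (C * y) (R * y + x)"

lemma det_pell_matrix: "det (pell_matrix R Q C x y) = x^2 - (R^2 + Q*C) * y^2"
  by (simp add: pell_matrix_def det_mat2 algebra_simps power2_eq_square)

text \<open>\<open>\<alpha>\<close> is a root of \<open>Q X\<^sup>2 - 2 R X - C\<close>, and \<open>k\<close> is the sign in \<open>\<alpha> = (R \<plusminus> \<surd>D) / Q\<close>.\<close>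
locale quadratic_irrational =
  fixes \<alpha> :: real and Q R C k :: int
  assumes irrational: "\<alpha> \<notin> \<rat>"
    and Q_pos: "0 < Q"
    and coprime: "coprime Q (gcd (2*R) C)"
    and discr_pos: "0 < R^2 + Q*C"
    and sign: "k = 1 \<or> k = -1"
    and root: "of_int Q * \<alpha> - of_int R = of_int k * sqrt (of_int (R^2 + Q*C))"
begin

abbreviation D :: int where "D \<equiv> R^2 + Q*C"

lemma D_pos_real: "0 < real_of_int D"
  using discr_pos by (simp only: of_int_0_less_iff)

lemma sqrt_D_pos: "0 < sqrt (of_int D)"
  using D_pos_real by (simp only: real_sqrt_gt_0_iff)

lemma quadratic: "of_int Q * \<alpha>^2 - 2 * of_int R * \<alpha> - of_int C = 0"
proof -
  have "(of_int Q * \<alpha> - of_int R)^2 = of_int D"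
    unfolding root using sign discr_pos
    by (auto simp: power_mult_distrib simp del: of_int_add of_int_mult of_int_power)
  then have "of_int Q * (of_int Q * \<alpha>^2 - 2 * of_int R * \<alpha> - of_int C) = (0::real)"
    by (simp add: algebra_simps power2_eq_square)
  then show ?thesis using Q_pos by simp
qed

lemma alpha_eigenvalue_pell_matrix:
  "alpha_eigenvalue \<alpha> (pell_matrix R Q C x y) (of_int x + of_int (k * y) * sqrt (of_int D))"
proof -
  have "of_int (- R * y + x) + of_int (Q * y) * \<alpha> = of_int x + of_int y * (of_int Q * \<alpha> - of_int R)"
    by (simp add: algebra_simps)
  moreover have "of_int (C * y) + of_int (R * y + x) * \<alpha>
      = (of_int x + of_int y * (of_int Q * \<alpha> - of_int R)) * \<alpha>
        - of_int y * (of_int Q * \<alpha>^2 - 2 * of_int R * \<alpha> - of_int C)"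
    by (simp add: algebra_simps power2_eq_square)
  ultimately show ?thesis
    unfolding alpha_eigenvalue_def pell_matrix_def mat2_nth quadratic root by (simp add: algebra_simps)
qed

lemma pell_matrix_if_alpha_eigenvalue:
  assumes "alpha_eigenvalue \<alpha> A l"
  shows "\<exists>x y. A = pell_matrix R Q C x y"
proof -
  obtain a b c d where A: "A = mat2 a b c d" using mat2_eta by blast
  have "real_of_int (Q*c - b*C) + of_int (Q*d - Q*a - 2*R*b) * \<alpha>
      = of_int Q * (of_int c + of_int d * \<alpha> - (of_int a + of_int b * \<alpha>) * \<alpha>)
        + of_int b * (of_int Q * \<alpha>^2 - 2 * of_int R * \<alpha> - of_int C)"
    by (simp add: algebra_simps power2_eq_square)
  also have "\<dots> = 0" using assms by (simp add: A alpha_eigenvalue_def quadratic)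
  finally have "Q*c - b*C = 0 \<and> Q*d - Q*a - 2*R*b = 0"
    by (rule irrational_int_combination_eq_0[OF irrational])
  then have "Q*c = b*C" and QR: "Q*(d - a) = b*(2*R)" by (auto simp: algebra_simps)
  then have "Q dvd b * (2*R)" "Q dvd b * C" by (metis dvd_triv_left)+
  then have "Q dvd gcd (b * (2*R)) (b * C)" by simp
  then have "Q dvd b * gcd (2*R) C" by (simp add: gcd_mult_left)
  then obtain y where b: "b = Q*y" using coprime by (auto simp: coprime_dvd_mult_left_iff)
  have "c = C*y" using \<open>Q*c = b*C\<close> Q_pos by (simp add: b algebra_simps)
  moreover have "d = a + 2*R*y"
  proof -
    have "Q * (d - a) = Q * (2*R*y)" using QR by (simp add: b algebra_simps)
    then show ?thesis using Q_pos by simp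
  qed
  ultimately have "A = pell_matrix R Q C (a + R*y) y"
    by (simp add: A b pell_matrix_def algebra_simps)
  then show ?thesis by blast
qed

lemma iso_aut_iff_matzpow:
  assumes A: "GL2Z A" and G: "alpha_eigenvalue \<alpha> G g" "det G = 1 \<or> det G = -1" "g > 0"
    and gen: "\<And>u. u > 0 \<Longrightarrow> quadratic_unit D u \<Longrightarrow> \<exists>n. u = g powi n"
  shows "iso_aut \<alpha> A \<longleftrightarrow> (\<exists>n. A = matzpow G n)"
proof
  assume "iso_aut \<alpha> A"
  then obtain l where l: "l > 0" "alpha_eigenvalue \<alpha> A l"
    using alpha_eigenvalue_if_iso_aut[OF irrational A] by blast
  then obtain x y where Axy: "A = pell_matrix R Q C x y" using pell_matrix_if_alpha_eigenvalue by blast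
  then have "l = of_int x + of_int (k * y) * sqrt (of_int D)"
    using l(2) alpha_eigenvalue_pell_matrix[of x y] by (simp add: alpha_eigenvalue_def)
  moreover have "x^2 - D * (k * y)^2 = det A"
    using sign by (auto simp: Axy det_pell_matrix power_mult_distrib)
  ultimately have "quadratic_unit D l"
    using A by (auto simp: GL2Z_def quadratic_unit_def pell_unit_def)
  then obtain n where "l = g powi n" using gen l(1) by blast
  then have "alpha_eigenvalue \<alpha> (matzpow G n) l" using alpha_eigenvalue_matzpow G by simp
  then show "\<exists>n. A = matzpow G n" using alpha_eigenvalue_unique[OF irrational l(2)] by blast
next
  assume "\<exists>n. A = matzpow G n"
  then obtain n where "A = matzpow G n" by blast
  then have "alpha_eigenvalue \<alpha> A (g powi n)" using alpha_eigenvalue_matzpow[OF G(1) _ G(2)] G(3) by simp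
  then show "iso_aut \<alpha> A" using iso_aut_if_alpha_eigenvalue[OF A] G(3) by simp
qed

lemma iso_aut_iff_no_negative_pell:
  assumes no_neg: "\<not> (\<exists>x y. x^2 - D * y^2 = -1)" and fund: "fund_sol D 1 x1 y1" and A: "GL2Z A"
  shows "iso_aut \<alpha> A \<longleftrightarrow> (\<exists>n. A = matzpow (pell_matrix R Q C x1 y1) n)"
proof (rule iso_aut_iff_matzpow[OF A alpha_eigenvalue_pell_matrix])
  define \<epsilon> where "\<epsilon> = of_int x1 + of_int y1 * sqrt (of_int D)"
  have x1: "x1 > 0" "y1 > 0" "x1^2 - D * y1^2 = 1" using fund by (auto simp: fund_sol_def)
  then have "\<epsilon> > 0"
    unfolding \<epsilon>_def using sqrt_D_pos by (auto intro!: add_pos_pos mult_pos_pos)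
  have "\<epsilon> * (of_int x1 - of_int y1 * sqrt (of_int D)) = of_int (x1^2 - D * y1^2)"
    using D_pos_real by (simp add: \<epsilon>_def algebra_simps power2_eq_square)
  also have "\<dots> = 1" using x1(3) by simp
  finally have conj: "inverse \<epsilon> = of_int x1 - of_int y1 * sqrt (of_int D)"
    by (rule inverse_unique)
  have g: "of_int x1 + of_int (k * y1) * sqrt (of_int D) = \<epsilon> powi k"
    using sign conj by (auto simp: \<epsilon>_def power_int_minus)
  show "det (pell_matrix R Q C x1 y1) = 1 \<or> det (pell_matrix R Q C x1 y1) = -1"
    using x1(3) by (simp add: det_pell_matrix)
  show "of_int x1 + of_int (k * y1) * sqrt (of_int D) > 0" using g \<open>\<epsilon> > 0\<close> by simp
  fix u assume "u > 0" "quadratic_unit D u"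
  then obtain n where "u = \<epsilon> powi n"
    using fundamental_unit_generates[OF discr_pos fund] no_neg unfolding \<epsilon>_def by blast
  moreover have "\<epsilon> powi n = (\<epsilon> powi k) powi (n * k)"
    using sign power_int_mult[of \<epsilon> k "n * k"] by auto
  ultimately show "\<exists>n. u = (of_int x1 + of_int (k * y1) * sqrt (of_int D)) powi n"
    unfolding g by blast
qed

lemma iso_aut_iff_negative_pell:
  assumes fund: "fund_sol D (-1) x1 y1" and A: "GL2Z A"
  shows "iso_aut \<alpha> A \<longleftrightarrow> (\<exists>n. A = matzpow (pell_matrix R Q C x1 (k * y1)) n)"
proof (rule iso_aut_iff_matzpow[OF A alpha_eigenvalue_pell_matrix])
  have x1: "x1 > 0" "y1 > 0" "x1^2 - D * y1^2 = -1" using fund by (auto simp: fund_sol_def)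
  have kk: "k * (k * y1) = y1" using sign by auto
  show "det (pell_matrix R Q C x1 (k * y1)) = 1 \<or> det (pell_matrix R Q C x1 (k * y1)) = -1"
    using x1(3) sign by (auto simp: det_pell_matrix power_mult_distrib)
  show "of_int x1 + of_int (k * (k * y1)) * sqrt (of_int D) > 0"
    unfolding kk using x1 sqrt_D_pos by (auto intro!: add_pos_pos mult_pos_pos)
  fix u assume "u > 0" "quadratic_unit D u"
  then show "\<exists>n. u = (of_int x1 + of_int (k * (k * y1)) * sqrt (of_int D)) powi n"
    using fundamental_unit_generates[OF discr_pos fund] unfolding kk by blast
qed

end

section \<open>The parameters of the theorem\<close>

lemma coprime_quotients_by_gcd:
  fixes X Y s t d Q T C :: int
  assumes d: "d = gcd X Y" and "Y \<noteq> 0" and "coprime s t"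
    and "d * Q = Y * s" "d * T = Y * t" "d * C = X"
  shows "coprime Q (gcd T C)"
proof -
  have "d > 0" using d \<open>Y \<noteq> 0\<close> by simp
  then have "d * gcd Q (gcd T C) = gcd (d * Q) (gcd (d * T) (d * C))"
    using gcd_mult_distrib_int[of d Q "gcd T C"] gcd_mult_distrib_int[of d T C] by simp
  also have "\<dots> = gcd (gcd (Y * s) (Y * t)) X" by (simp only: assms(4-6) gcd.assoc)
  also have "gcd (Y * s) (Y * t) = \<bar>Y\<bar>"
    using \<open>coprime s t\<close> by (simp flip: gcd_mult_distrib_int)
  also have "gcd \<bar>Y\<bar> X = d" by (simp add: d gcd.commute)
  finally show ?thesis using \<open>d > 0\<close> by (simp add: coprime_iff_gcd_eq_1)
qed

lemma reduced_parameters_int: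
  fixes r :: int and p q s :: nat
  assumes "q > 0" "s > 0" "odd s" "gcd r (int s) = 1"
  defines "d1 \<equiv> gcd (int p * int s^2 - int q * r^2) (int q * int s)"
  defines "R \<equiv> int q * r * int s div d1" and "Q \<equiv> int q * int s^2 div d1"
    and "C \<equiv> (int p * int s^2 - int q * r^2) div d1"
  shows "d1 > 0" and "d1 * R = int q * r * int s" and "d1 * Q = int q * int s^2"
    and "coprime Q (gcd (2*R) C)" and "d1^2 * (R^2 + Q*C) = int p * int q * int s^4"
    and "int p * int q * int s^4 div d1^2 = R^2 + Q*C"
proof -
  have Y: "int q * int s \<noteq> 0" using assms(1,2) by simp
  show d1: "d1 > 0" unfolding d1_def using Y by simp
  have "d1 dvd int q * int s" "d1 dvd int p * int s^2 - int q * r^2" unfolding d1_def by simp_all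
  then have "d1 dvd (int q * int s) * r" "d1 dvd (int q * int s) * int s" by (simp_all add: dvd_mult2)
  then have "d1 dvd int q * r * int s" "d1 dvd int q * int s^2" by (simp_all add: ac_simps power2_eq_square)
  then show R: "d1 * R = int q * r * int s" and Q: "d1 * Q = int q * int s^2"
    by (simp_all add: R_def Q_def)
  have C: "d1 * C = int p * int s^2 - int q * r^2"
    using \<open>d1 dvd int p * int s^2 - int q * r^2\<close> by (simp add: C_def)
  have "coprime (int s) 2" using assms(3) by simp
  moreover have "coprime (int s) r" using assms(4) by (simp add: coprime_iff_gcd_eq_1 gcd.commute)
  ultimately have "coprime (int s) (2*r)" by simp
  then show "coprime Q (gcd (2*R) C)"
    by (rule coprime_quotients_by_gcd[OF d1_def[THEN meta_eq_to_obj_eq] Y])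
      (use R Q C in \<open>simp_all add: power2_eq_square algebra_simps\<close>)
  have "d1^2 * (R^2 + Q*C) = (d1*R)^2 + (d1*Q) * (d1*C)" by (simp add: algebra_simps power2_eq_square)
  also have "\<dots> = int p * int q * int s^4"
    unfolding R Q C by (simp add: algebra_simps power2_eq_square power4_eq_xxxx)
  finally show N: "d1^2 * (R^2 + Q*C) = int p * int q * int s^4" .
  then show "int p * int q * int s^4 div d1^2 = R^2 + Q*C"
    using d1 by (metis nonzero_mult_div_cancel_left power_not_zero less_irrefl)
qed

lemma quadratic_irrational_reduced_parameters:
  fixes r :: int and p q s :: nat and k :: int and \<alpha> :: real
  assumes k: "k = 1 \<or> k = -1" and q: "q > 0" and s: "s > 0" "odd s" "gcd r (int s) = 1"
    and \<alpha>: "\<alpha> = real_of_int r / real s + real_of_int k * sqrt (real p / real q)" and irr: "\<alpha> \<notin> \<rat>"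
  defines "d1 \<equiv> gcd (int p * int s^2 - int q * r^2) (int q * int s)"
  defines "R \<equiv> int q * r * int s div d1" and "Q \<equiv> int q * int s^2 div d1"
    and "C \<equiv> (int p * int s^2 - int q * r^2) div d1"
  shows "quadratic_irrational \<alpha> Q R C k"
proof -
  note int = reduced_parameters_int[where p = p, OF q s, folded d1_def, folded R_def Q_def C_def]
  have d1: "real_of_int d1 > 0" using int(1) by simp
  have Q: "0 < Q" using int(1,3) q s by (smt (verit) of_nat_0_less_iff zero_less_mult_iff zero_less_power)
  define P where "P = real q * real s^2 * sqrt (real p / real q) / of_int d1"
  have d1P: "of_int d1 * P = real q * real s^2 * sqrt (real p / real q)" using d1 by (simp add: P_def)
  have root: "of_int Q * \<alpha> - of_int R = of_int k * P"
  proof -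
    have "of_int d1 * (of_int Q * \<alpha> - of_int R) = of_int (d1 * Q) * \<alpha> - of_int (d1 * R)"
      by (simp add: algebra_simps)
    also have "\<dots> = of_int k * (of_int d1 * P)"
      using s unfolding int(2,3) d1P \<alpha> by (simp add: field_simps power2_eq_square)
    also have "\<dots> = of_int d1 * (of_int k * P)" by (simp only: mult.left_commute)
    finally show ?thesis using d1 by simp
  qed
  have "(of_int d1 * P)^2 = (real q)^2 * (real s^2)^2 * (real p / real q)"
    unfolding d1P by (simp add: power_mult_distrib)
  also have "\<dots> = real p * real q * real s^4"
    using q by (simp add: power2_eq_square power4_eq_xxxx field_simps)
  also have "\<dots> = of_int d1^2 * of_int (R^2 + Q*C)"
    using arg_cong[OF int(5), of real_of_int] by simp
  finally have P2: "P^2 = of_int (R^2 + Q*C)" using d1 by (simp add: power_mult_distrib)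
  have "P \<noteq> 0"
  proof
    assume "P = 0"
    then have "\<alpha> = of_int R / of_int Q" using root Q by (simp add: field_simps)
    then show False using irr by simp
  qed
  show ?thesis
  proof
    show "\<alpha> \<notin> \<rat>" "0 < Q" "coprime Q (gcd (2*R) C)" "k = 1 \<or> k = -1"
      using irr Q int(4) k by simp_all
    show "0 < R^2 + Q*C" using P2 \<open>P \<noteq> 0\<close> by (metis of_int_0_less_iff zero_less_power2)
    show "of_int Q * \<alpha> - of_int R = of_int k * sqrt (of_int (R^2 + Q*C))"
      unfolding root P2[symmetric] using d1 by (simp add: P_def)
  qed
qed

theorem mainTheorem16:
  fixes r :: int and p q s :: nat and k :: int and \<alpha> :: real
  assumes "k = 1 \<or> k = -1"
    and "q > 0" and "s > 0" and "odd s"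
    and "gcd r (int s) = 1" and "gcd p q = 1"
    and "\<alpha> = real_of_int r / real s + real_of_int k * sqrt (real p / real q)"
    and "\<alpha> > 0" and "\<alpha> \<notin> \<rat>"
  defines "d1 \<equiv> gcd (int p * int s^2 - int q * r^2) (int q * int s)"
  defines "N \<equiv> (int p * int q * int s^4) div d1^2"
  shows
    "(\<not> (\<exists>x y :: int. x^2 - N * y^2 = -1) \<longrightarrow>
        (\<forall>x1 y1. fund_sol N 1 x1 y1 \<longrightarrow>
          (\<forall>A. GL2Z A \<longrightarrow>
             (iso_aut \<alpha> A \<longleftrightarrow>
               (\<exists>n::int. A = matzpow
                  (mat2 (- (int q * r * int s div d1) * y1 + x1) ((int q * int s^2 div d1) * y1)
                        (((int p * int s^2 - int q * r^2) div d1) * y1) ((int q * r * int s div d1) * y1 + x1))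
                  n)))))
   \<and> ((\<exists>x y :: int. x^2 - N * y^2 = -1) \<longrightarrow>
        (\<forall>x1' y1'. fund_sol N (-1) x1' y1' \<longrightarrow>
          (\<forall>A. GL2Z A \<longrightarrow>
             (iso_aut \<alpha> A \<longleftrightarrow>
               (\<exists>n::int. A = matzpow
                  (mat2 (- (int q * r * int s div d1) * k * y1' + x1') ((int q * int s^2 div d1) * k * y1')
                        (((int p * int s^2 - int q * r^2) div d1) * k * y1') ((int q * r * int s div d1) * k * y1' + x1'))
                  n)))))"
proof -
  define R Q C where "R = int q * r * int s div d1" and "Q = int q * int s^2 div d1"
    and "C = (int p * int s^2 - int q * r^2) div d1"
  interpret quadratic_irrational \<alpha> Q R C k
    using quadratic_irrational_reduced_parameters[OF assms(1-5,7,9)] unfolding R_def Q_def C_def d1_def .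
  have N: "N = R^2 + Q*C"
    using reduced_parameters_int(6)[OF assms(2-5)] unfolding N_def R_def Q_def C_def d1_def .
  have "mat2 (- R * k * y + x) (Q * k * y) (C * k * y) (R * k * y + x) = pell_matrix R Q C x (k * y)"
    for x y by (simp add: pell_matrix_def mult.assoc)
  then show ?thesis
    unfolding N R_def[symmetric] Q_def[symmetric] C_def[symmetric]
    using iso_aut_iff_no_negative_pell iso_aut_iff_negative_pell by (simp add: pell_matrix_def)
qed

end
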